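(* Suppose goods are perishable ($d=\infty$) and the inverse hazard rate $v\mapsto(1-F(v))/f(v)$ is non-increasing. Let $w,w'\in[0,1]$ with $w>w'$, and let $(\hat v^w_k)_k,K_w$ and $(\hat v^{w'}_k)_k,K_{w'}$ be the thresholds and maximal queue lengths defined in the context. Then there exists $\bar k\in\{1,2,\dots,\min\{K_{w'},K_w\}\}$ such that $\hat v^w_k\le\hat v^{w'}_k$ for all $k\le\bar k$, and $\hat v^w_k>\hat v^{w'}_k$ for all $k$ with $\bar k+1\le k\le\min\{K_{w'},K_w\}$.
   Context: Goods arrive by a Poisson process with rate $\mu>0$, buyers by an independent Poisson process with rate $\lambda>0$; values are i.i.d. from $F$ on $[0,1]$ with density $f>0$, $f$ absolutely continuous, $J(v)=v-\frac{1-F(v)}{f(v)}$ strictly increasing with $J(0)<0$; waiting cost $c>0$. A planner maximizes seller revenue plus $w\in[0,1]$ times buyers' net surplus; the optimal policy keeps the buyer ranked $k$-th in the queue iff his value is at least $\hat v^w_k$, where the thresholds are defined with the weighted virtual value $J_w(v):=v-(1-w)\frac{1-F(v)}{f(v)}$ as follows. Let $\rho(v):=\lambda[1-F(v)]/\mu$. $\hat v^w_1=J_w^{-1}(c/\mu)$ if $c/\mu<1$ and $\hat v^w_1=1$ otherwise; for $k\ge2$, if $\hat v^w_{k-1}<1$ and $\mu\int_{\hat v^w_{k-1}}^1\frac{J_w'(v)}{1+\rho(v)+\dots+\rho(v)^{k-1}}dv\ge c$, then $\hat v^w_k$ is the unique $x\in(\hat v^w_{k-1},1]$ with $\mu\int_{\hat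 v^w_{k-1}}^{x}\frac{J_w'(v)}{1+\rho(v)+\dots+\rho(v)^{k-1}}dv=c$; otherwise $\hat v^w_k=1$. $K_w$ is the number of $k$ with $\hat v^w_k<1$. *)

theory Defs
  imports "HOL-Analysis.Analysis"
begin

definition Jw :: "(real \<Rightarrow> real) \<Rightarrow> (real \<Rightarrow> real) \<Rightarrow> real \<Rightarrow> real \<Rightarrow> real" where
  "Jw F f w v = v - (1 - w) * (1 - F v) / f v"

text \<open>Derivative of J_w, written out: f is absolutely continuous with (a.e.) derivative g,
  F' = f, hence J_w' = 1 + (1-w) (1 + (1-F) g / f^2).\<close>
definition Jwd :: "(real \<Rightarrow> real) \<Rightarrow> (real \<Rightarrow> real) \<Rightarrow> (real \<Rightarrow> real) \<Rightarrow> real \<Rightarrow> real \<Rightarrow> real" where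
  "Jwd F f g w v = 1 + (1 - w) * (1 + (1 - F v) * g v / (f v)\<^sup>2)"

definition rho :: "real \<Rightarrow> real \<Rightarrow> (real \<Rightarrow> real) \<Rightarrow> real \<Rightarrow> real" where
  "rho lam mu F v = lam * (1 - F v) / mu"

definition integrand :: "real \<Rightarrow> real \<Rightarrow> (real \<Rightarrow> real) \<Rightarrow> (real \<Rightarrow> real) \<Rightarrow> (real \<Rightarrow> real)
    \<Rightarrow> real \<Rightarrow> nat \<Rightarrow> real \<Rightarrow> real" where
  "integrand lam mu F f g w k v = Jwd F f g w v / (\<Sum>i<k. (rho lam mu F v) ^ i)"

text \<open>Threshold for the buyer ranked k-th (k \<ge> 1); index 0 is unused (dummy value 1).\<close>
fun vhat :: "real \<Rightarrow> real \<Rightarrow> real \<Rightarrow> (real \<Rightarrow> real) \<Rightarrow> (real \<Rightarrow> real) \<Rightarrow> (real \<Rightarrow> real)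
    \<Rightarrow> real \<Rightarrow> nat \<Rightarrow> real" where
  "vhat lam mu c F f g w 0 = 1"
| "vhat lam mu c F f g w (Suc 0) =
     (if c / mu < 1 then (THE x. x \<in> {0..1} \<and> Jw F f w x = c / mu) else 1)"
| "vhat lam mu c F f g w (Suc (Suc m)) =
     (let p = vhat lam mu c F f g w (Suc m); k = Suc (Suc m) in
      if p < 1 \<and> mu * integral {p..1} (integrand lam mu F f g w k) \<ge> c
      then (THE x. x \<in> {p<..1} \<and> mu * integral {p..x} (integrand lam mu F f g w k) = c)
      else 1)"

definition Kw :: "real \<Rightarrow> real \<Rightarrow> real \<Rightarrow> (real \<Rightarrow> real) \<Rightarrow> (real \<Rightarrow> real) \<Rightarrow> (real \<Rightarrow> real)
    \<Rightarrow> real \<Rightarrow> nat" where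
  "Kw lam mu c F f g w = card {k. 1 \<le> k \<and> vhat lam mu c F f g w k < 1}"

end

theory Submission
  imports Defs
begin

text \<open>
  A non-increasing
  inverse hazard rate (1 - F)/f makes J_w' >= 1 and non-increasing in w almost everywhere.
  As J_w >= J_w', the first threshold for w lies below the one for w'. Once the order of the
  thresholds flips at some k, it stays flipped: otherwise the step from the k-th to the (k+1)-st
  threshold for w would lie strictly inside the corresponding step for w' while carrying a
  pointwise smaller integrand, although both integrals equal c/mu. So the order flips at most
  once, and kbar is the last index before the flip.
\<close>

lemma integral_le_off_negligible:
  fixes p q :: "'a::euclidean_space \<Rightarrow> real"
  assumes "p integrable_on S" "q integrable_on S" "negligible N"
    and "\<And>x. x \<in> S - N \<Longrightarrow> p x \<le> q x"
  shows "integral S p \<le> integral S q"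
proof -
  define p' where "p' = (\<lambda>x. if x \<in> N then q x else p x)"
  have "p' integrable_on S"
    by (rule integrable_spike[OF assms(1,3)]) (auto simp: p'_def)
  moreover have "integral S p = integral S p'"
    by (rule integral_spike[OF assms(3)]) (auto simp: p'_def)
  ultimately show ?thesis
    using assms(2,4) by (auto simp: p'_def intro: integral_le)
qed

lemma has_real_derivative_right_nonpos:
  fixes h :: "real \<Rightarrow> real"
  assumes "(h has_real_derivative D) (at v within {v..b})" "v < b"
    and "\<And>y. y \<in> {v..b} \<Longrightarrow> h y \<le> h v"
  shows "D \<le> 0"
proof (rule ccontr)
  assume "\<not> D \<le> 0"
  then obtain d where "d > 0" and incr: "\<And>t. 0 < t \<Longrightarrow> v + t \<in> {v..b} \<Longrightarrow> t < d \<Longrightarrow> h v < h (v + t)"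
    using has_real_derivative_pos_inc_right[OF assms(1)] by force
  define t where "t = min (d / 2) (b - v)"
  have "h v < h (v + t)"
    using \<open>d > 0\<close> \<open>v < b\<close> by (intro incr) (auto simp: t_def)
  moreover have "h (v + t) \<le> h v"
    using \<open>d > 0\<close> \<open>v < b\<close> by (intro assms(3)) (auto simp: t_def)
  ultimately show False by simp
qed

lemma indefinite_integral_right_derivative_ae:
  fixes g :: "real \<Rightarrow> real"
  assumes "g integrable_on {a..b}"
  obtains N where "negligible N"
    "\<And>v. v \<in> {a..<b} - N \<Longrightarrow> ((\<lambda>x. integral {a..x} g) has_real_derivative g v) (at v within {v..b})"
proof -
  define g0 where "g0 = (\<lambda>x. if x \<in> {a..b} then g x else 0)"
  have "g0 integrable_on UNIV"
    unfolding g0_def using assms Henstock_Kurzweil_Integration.integrable_restrict_UNIV by blast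
  then have "\<And>s t. g0 integrable_on cbox s t"
    by (rule integrable_on_subcbox) auto
  then obtain N where "negligible N"
    and N: "\<And>x e. \<lbrakk>x \<notin> N; 0 < e\<rbrakk> \<Longrightarrow> \<exists>d>0. \<forall>h. 0 < h \<and> h < d \<longrightarrow>
              norm (integral (cbox x (x + h *\<^sub>R One)) g0 /\<^sub>R h ^ DIM(real) - g0 x) < e"
    using integrable_ccontinuous_explicit by blast
  have "((\<lambda>x. integral {a..x} g) has_real_derivative g v) (at v within {v..b})"
    if v: "v \<in> {a..<b} - N" for v
    unfolding has_field_derivative_iff Lim_within
  proof (intro allI impI)
    fix e :: real
    assume "e > 0"
    then obtain d where "d > 0" and d: "\<forall>h. 0 < h \<and> h < d \<longrightarrow>
        norm (integral (cbox v (v + h *\<^sub>R One)) g0 /\<^sub>R h ^ DIM(real) - g0 v) < e"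
      using N[of v e] v by auto
    have "dist ((integral {a..y} g - integral {a..v} g) / (y - v)) (g v) < e"
      if y: "y \<in> {v..b}" "0 < dist y v" "dist y v < d" for y
    proof -
      have "integral {a..v} g + integral {v..y} g = integral {a..y} g"
        using v y by (intro Henstock_Kurzweil_Integration.integral_combine
            integrable_on_subinterval[OF assms]) auto
      moreover have "integral {v..y} g = integral {v..y} g0"
        using v y by (intro integral_cong) (auto simp: g0_def)
      ultimately have "(integral {a..y} g - integral {a..v} g) / (y - v) =
          integral (cbox v (v + (y - v) *\<^sub>R One)) g0 /\<^sub>R (y - v) ^ DIM(real)"
        by (simp add: divide_inverse mult.commute)
      moreover have "g0 v = g v"
        using v by (simp add: g0_def)
      ultimately show ?thesis
        using d[rule_format, of "y - v"] y by (simp only: dist_norm) simp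
    qed
    then show "\<exists>d>0. \<forall>y\<in>{v..b}. 0 < dist y v \<and> dist y v < d \<longrightarrow>
        dist ((integral {a..y} g - integral {a..v} g) / (y - v)) (g v) < e"
      using \<open>d > 0\<close> by blast
  qed
  then show thesis
    using \<open>negligible N\<close> that by blast
qed

lemma THE_eq_if_inj_on:
  assumes "inj_on h S" "x \<in> S" "h x = y"
  shows "(THE x. x \<in> S \<and> h x = y) = x"
  using assms by (auto intro: the_equality dest: inj_onD)

lemma single_crossing:
  fixes a b :: "nat \<Rightarrow> 'a::linorder"
  assumes "1 \<le> n" "a 1 \<le> b 1"
    and persist: "\<And>k. 1 \<le> k \<Longrightarrow> k < n \<Longrightarrow> b k < a k \<Longrightarrow> b (Suc k) < a (Suc k)"
  shows "\<exists>kbar \<in> {1..n}. (\<forall>k \<in> {1..kbar}. a k \<le> b k) \<and>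
           (\<forall>k. kbar + 1 \<le> k \<and> k \<le> n \<longrightarrow> a k > b k)"
proof -
  define A where "A = {k \<in> {1..n}. \<forall>j \<in> {1..k}. a j \<le> b j}"
  have "finite A" "1 \<in> A"
    using assms(1,2) by (auto simp: A_def)
  define kbar where "kbar = Max A"
  have kbar: "kbar \<in> A"
    unfolding kbar_def using \<open>finite A\<close> \<open>1 \<in> A\<close> by (intro Max_in) auto
  have "b k < a k" if "kbar + 1 \<le> k" "k \<le> n" for k
    using that
  proof (induction k rule: nat_induct_at_least)
    case base
    have "Suc kbar \<notin> A"
      unfolding kbar_def using \<open>finite A\<close> by (auto dest: Max_ge)
    then show ?case
      using kbar base by (auto simp: A_def le_Suc_eq)
  next
    case (Suc k)
    then show ?case
      using kbar by (intro persist) (auto simp: A_def)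
  qed
  then show ?thesis
    using kbar by (auto simp: A_def)
qed

lemma Jw_eq_convex_combination: "Jw F f w v = w * v + (1 - w) * Jw F f 0 v"
  unfolding Jw_def by (simp add: algebra_simps)

lemma Jw_diff: "Jw F f w v - Jw F f w' v = (w - w') * ((1 - F v) / f v)"
  unfolding Jw_def by (simp add: algebra_simps diff_divide_distrib add_divide_distrib)

lemma Jwd_ge_1: "0 \<le> 1 + (1 - F v) * g v / (f v)\<^sup>2 \<Longrightarrow> w \<le> 1 \<Longrightarrow> 1 \<le> Jwd F f g w v"
  unfolding Jwd_def by simp

lemma Jwd_antimono:
  "0 \<le> 1 + (1 - F v) * g v / (f v)\<^sup>2 \<Longrightarrow> w' \<le> w \<Longrightarrow> Jwd F f g w v \<le> Jwd F f g w' v"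
  unfolding Jwd_def by (simp add: mult_right_mono)

locale queue_market =
  fixes lam mu c :: real and F f g :: "real \<Rightarrow> real"
  assumes mu_pos: "mu > 0" and lam_pos: "lam > 0" and c_pos: "c > 0" and c_lt_mu: "c < mu"
    and f_pos: "\<forall>v\<in>{0..1}. f v > 0"
    and g_int: "g absolutely_integrable_on {0..1}"
    and f_ac: "\<forall>x\<in>{0..1}. (g has_integral (f x - f 0)) {0..x}"
    and F_def: "\<forall>x\<in>{0..1}. F x = integral {0..x} f"
    and F_one: "F 1 = 1"
    and J_mono: "strict_mono_on {0..1} (Jw F f 0)"
    and ihr: "\<forall>x\<in>{0..1}. \<forall>y\<in>{0..1}. x \<le> y \<longrightarrow> (1 - F y) / f y \<le> (1 - F x) / f x"
begin

lemma g_integrable: "g integrable_on {0..1}"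
  using g_int absolutely_integrable_on_def by blast

lemma f_eq_integral: "x \<in> {0..1} \<Longrightarrow> f x = f 0 + integral {0..x} g"
  using f_ac integral_unique by (metis add.commute diff_add_cancel)

lemma continuous_on_f: "continuous_on {0..1} f"
proof -
  have "continuous_on {0..1} (\<lambda>x. f 0 + integral {0..x} g)"
    by (intro continuous_intros indefinite_integral_continuous_1 g_integrable)
  then show ?thesis
    by (rule continuous_on_eq) (metis f_eq_integral)
qed

lemma f_integrable: "{a..b} \<subseteq> {0..1} \<Longrightarrow> f integrable_on {a..b}"
  using continuous_on_f integrable_continuous_interval continuous_on_subset by blast

lemma continuous_on_F: "continuous_on {0..1} F"
proof -
  have "continuous_on {0..1} (\<lambda>x. integral {0..x} f)"
    by (intro indefinite_integral_continuous_1 f_integrable) simp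
  then show ?thesis
    by (rule continuous_on_eq) (simp add: F_def)
qed

lemma F_0: "F 0 = 0"
  using F_def by auto

lemma F_mono: "0 \<le> x \<Longrightarrow> x \<le> y \<Longrightarrow> y \<le> 1 \<Longrightarrow> F x \<le> F y"
proof -
  assume xy: "0 \<le> x" "x \<le> y" "y \<le> 1"
  have "integral {0..x} f + integral {x..y} f = integral {0..y} f"
    using xy by (intro Henstock_Kurzweil_Integration.integral_combine f_integrable) auto
  moreover have "0 \<le> integral {x..y} f"
  proof (rule integral_nonneg)
    show "f integrable_on {x..y}"
      using xy by (intro f_integrable) auto
    show "0 \<le> f t" if "t \<in> {x..y}" for t
      using f_pos that xy by (metis atLeastAtMost_iff less_imp_le order_trans)
  qed
  ultimately show "F x \<le> F y"
    using xy F_def by auto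
qed

lemma F_range: "x \<in> {0..1} \<Longrightarrow> F x \<in> {0..1}"
  using F_mono[of 0 x] F_mono[of x 1] unfolding F_0 F_one atLeastAtMost_iff by simp

lemma F_has_derivative: "v \<in> {0..1} \<Longrightarrow> (F has_real_derivative f v) (at v within {0..1})"
proof -
  assume v: "v \<in> {0..1}"
  have "((\<lambda>x. integral {0..x} f) has_real_derivative f v) (at v within {0..1})"
    by (rule integral_has_real_derivative[OF continuous_on_f v])
  then show ?thesis
    by (rule has_field_derivative_transform_within[OF _ zero_less_one v]) (simp add: F_def)
qed

lemma f_right_derivative_ae:
  obtains N where "negligible N"
    "\<And>v. v \<in> {0..<1} - N \<Longrightarrow> (f has_real_derivative g v) (at v within {v..1})"
proof -
  obtain N where "negligible N" and N:
    "\<And>v. v \<in> {0..<1} - N \<Longrightarrow> ((\<lambda>x. integral {0..x} g) has_real_derivative g v) (at v within {v..1})"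
    using indefinite_integral_right_derivative_ae[OF g_integrable] by blast
  have "(f has_real_derivative g v) (at v within {v..1})" if v: "v \<in> {0..<1} - N" for v
  proof -
    have deriv: "((\<lambda>x. f 0 + integral {0..x} g) has_real_derivative g v) (at v within {v..1})"
      using DERIV_add[OF DERIV_const N[OF v]] by simp
    have eq: "f 0 + integral {0..x} g = f x" if "x \<in> {v..1}" for x
      using v that f_eq_integral[of x] by simp
    show ?thesis
      using has_field_derivative_transform_within[OF deriv zero_less_one _ eq] v by simp
  qed
  with \<open>negligible N\<close> that show thesis by blast
qed

text \<open>The expression below is minus the right derivative of the inverse hazard rate (1 - F)/f,
  which exists almost everywhere and is non-positive because (1 - F)/f is non-increasing.\<close>

lemma inverse_hazard_slope_nonpos_ae:
  obtains N where "negligible N" "\<And>v. v \<in> {0..1} - N \<Longrightarrow> 0 \<le> 1 + (1 - F v) * g v / (f v)\<^sup>2"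
proof -
  obtain N where "negligible N"
    and f_deriv: "\<And>v. v \<in> {0..<1} - N \<Longrightarrow> (f has_real_derivative g v) (at v within {v..1})"
    using f_right_derivative_ae by blast
  have "0 \<le> 1 + (1 - F v) * g v / (f v)\<^sup>2" if v: "v \<in> {0..<1} - N" for v
  proof -
    have "f v > 0"
      using f_pos v by auto
    have "(F has_real_derivative f v) (at v within {v..1})"
      by (rule DERIV_subset[OF F_has_derivative]) (use v in auto)
    then have "((\<lambda>y. 1 - F y) has_real_derivative - f v) (at v within {v..1})"
      using DERIV_diff[OF DERIV_const] by fastforce
    from DERIV_divide[OF this f_deriv[OF v]] \<open>f v > 0\<close>
    have deriv: "((\<lambda>y. (1 - F y) / f y) has_real_derivative
        (- f v * f v - (1 - F v) * g v) / (f v * f v)) (at v within {v..1})"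
      by simp
    have "(1 - F y) / f y \<le> (1 - F v) / f v" if "y \<in> {v..1}" for y
      using v that by (intro ihr[rule_format]) auto
    with deriv have "(- f v * f v - (1 - F v) * g v) / (f v * f v) \<le> 0"
      using v by (intro has_real_derivative_right_nonpos) auto
    with \<open>f v > 0\<close> have "- f v * f v - (1 - F v) * g v \<le> 0"
      by (smt (verit) divide_le_0_iff mult_pos_pos)
    with \<open>f v > 0\<close> show ?thesis
      by (simp add: field_simps power2_eq_square)
  qed
  then show thesis
    using that[of "insert 1 N"] \<open>negligible N\<close> by auto
qed

definition rho_sum :: "nat \<Rightarrow> real \<Rightarrow> real" where
  "rho_sum k v = (\<Sum>i<k. rho lam mu F v ^ i)"

lemma integrand_eq: "integrand lam mu F f g w k v = Jwd F f g w v / rho_sum k v"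
  by (simp add: integrand_def rho_sum_def)

lemma rho_bounds: "v \<in> {0..1} \<Longrightarrow> 0 \<le> rho lam mu F v \<and> rho lam mu F v \<le> rho lam mu F 0"
  using F_range[of v] mu_pos lam_pos
  by (auto simp: rho_def F_0 divide_right_mono mult_left_mono)

lemma rho_sum_ge_1:
  assumes "1 \<le> k" "v \<in> {0..1}"
  shows "1 \<le> rho_sum k v"
proof -
  obtain m where "k = Suc m"
    using assms(1) by (cases k) auto
  then have "rho_sum k v = 1 + (\<Sum>i<m. rho lam mu F v ^ Suc i)"
    unfolding rho_sum_def by (simp only: sum.lessThan_Suc_shift) simp
  then show ?thesis
    using rho_bounds[OF assms(2)] by (simp add: sum_nonneg)
qed

lemma rho_sum_le: "v \<in> {0..1} \<Longrightarrow> rho_sum k v \<le> rho_sum k 0"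
  using rho_bounds[of v] by (auto simp: rho_sum_def intro!: sum_mono power_mono)

lemma continuous_on_rho_sum: "continuous_on {0..1} (rho_sum k)"
  unfolding rho_sum_def[abs_def] rho_def using continuous_on_F mu_pos
  by (intro continuous_intros) auto

lemma integrand_integrable:
  assumes "{a..b} \<subseteq> {0..1}" "1 \<le> k"
  shows "integrand lam mu F f g w k integrable_on {a..b}"
proof -
  \<comment> \<open>g enters linearly with a continuous coefficient, so absolute integrability of g suffices\<close>
  let ?coeff = "\<lambda>v. (1 - w) * (1 - F v) / ((f v)\<^sup>2 * rho_sum k v)"
  have nonzero: "rho_sum k v \<noteq> 0" "f v \<noteq> 0" if "v \<in> {0..1}" for v
    using rho_sum_ge_1[OF assms(2) that] f_pos that by force+
  have "continuous_on {0..1} ?coeff"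
    using nonzero by (intro continuous_intros continuous_on_F continuous_on_f continuous_on_rho_sum) auto
  then have "(\<lambda>v. ?coeff v * g v) absolutely_integrable_on {0..1}"
    by (intro absolutely_integrable_bounded_measurable_product_real g_int
        continuous_imp_measurable_on_sets_lebesgue compact_imp_bounded compact_continuous_image) auto
  then have g_part: "(\<lambda>v. ?coeff v * g v) integrable_on {a..b}"
    using assms(1) integrable_on_subinterval absolutely_integrable_on_def by blast
  have "(\<lambda>v. (2 - w) / rho_sum k v) integrable_on {a..b}"
    using nonzero assms(1)
    by (intro integrable_continuous_interval continuous_on_subset[OF _ assms(1)] continuous_intros
        continuous_on_rho_sum) auto
  from integrable_add[OF this g_part]
  have "(\<lambda>v. (2 - w) / rho_sum k v + ?coeff v * g v) integrable_on {a..b}" .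
  moreover have "(2 - w) / rho_sum k v + ?coeff v * g v = integrand lam mu F f g w k v"
    if "v \<in> {a..b}" for v
    using nonzero[of v] that assms(1) by (auto simp: integrand_eq Jwd_def field_simps)
  ultimately show ?thesis
    by (rule integrable_eq) simp
qed

lemma integral_integrand_combine:
  "0 \<le> a \<Longrightarrow> a \<le> b \<Longrightarrow> b \<le> d \<Longrightarrow> d \<le> 1 \<Longrightarrow> 1 \<le> k \<Longrightarrow>
    integral {a..b} (integrand lam mu F f g w k) + integral {b..d} (integrand lam mu F f g w k) =
    integral {a..d} (integrand lam mu F f g w k)"
  by (intro Henstock_Kurzweil_Integration.integral_combine integrand_integrable) auto

lemma integral_integrand_ge:
  assumes "0 \<le> a" "a \<le> b" "b \<le> 1" "1 \<le> k" "w \<le> 1"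
  shows "(b - a) / rho_sum k 0 \<le> integral {a..b} (integrand lam mu F f g w k)"
proof -
  obtain N where "negligible N" and N: "\<And>v. v \<in> {0..1} - N \<Longrightarrow> 0 \<le> 1 + (1 - F v) * g v / (f v)\<^sup>2"
    using inverse_hazard_slope_nonpos_ae by blast
  have "integral {a..b} (\<lambda>v. 1 / rho_sum k 0) \<le> integral {a..b} (integrand lam mu F f g w k)"
  proof (rule integral_le_off_negligible[OF _ integrand_integrable \<open>negligible N\<close>])
    fix v
    assume "v \<in> {a..b} - N"
    then have v: "v \<in> {0..1} - N"
      using assms by auto
    have "1 \<le> rho_sum k v" "rho_sum k v \<le> rho_sum k 0"
      using rho_sum_ge_1[OF assms(4)] rho_sum_le v by auto
    then have "1 / rho_sum k 0 \<le> 1 / rho_sum k v"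
      by (intro divide_left_mono) auto
    also have "\<dots> \<le> Jwd F f g w v / rho_sum k v"
      using Jwd_ge_1[where F=F and f=f and g=g, OF N[OF v] assms(5)] \<open>1 \<le> rho_sum k v\<close> by (intro divide_right_mono) auto
    finally show "1 / rho_sum k 0 \<le> integrand lam mu F f g w k v"
      by (simp add: integrand_eq)
  qed (use assms in auto)
  then show ?thesis
    using assms by simp
qed

lemma integral_integrand_pos:
  "0 \<le> a \<Longrightarrow> a < b \<Longrightarrow> b \<le> 1 \<Longrightarrow> 1 \<le> k \<Longrightarrow> w \<le> 1 \<Longrightarrow>
    0 < integral {a..b} (integrand lam mu F f g w k)"
  using integral_integrand_ge[of a b k w] rho_sum_ge_1[of k 0]
  by (smt (verit) atLeastAtMost_iff divide_pos_pos)

lemma integral_integrand_nonneg: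
  "0 \<le> a \<Longrightarrow> a \<le> b \<Longrightarrow> b \<le> 1 \<Longrightarrow> 1 \<le> k \<Longrightarrow> w \<le> 1 \<Longrightarrow>
    0 \<le> integral {a..b} (integrand lam mu F f g w k)"
  using integral_integrand_pos[of a b k w] by (cases "a = b") auto

lemma integral_integrand_antimono:
  assumes "0 \<le> a" "b \<le> 1" "1 \<le> k" "w' \<le> w"
  shows "integral {a..b} (integrand lam mu F f g w k) \<le> integral {a..b} (integrand lam mu F f g w' k)"
proof -
  obtain N where "negligible N" and N: "\<And>v. v \<in> {0..1} - N \<Longrightarrow> 0 \<le> 1 + (1 - F v) * g v / (f v)\<^sup>2"
    using inverse_hazard_slope_nonpos_ae by blast
  show ?thesis
  proof (rule integral_le_off_negligible[OF integrand_integrable integrand_integrable \<open>negligible N\<close>])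
    fix v
    assume "v \<in> {a..b} - N"
    then have v: "v \<in> {0..1} - N"
      using assms by auto
    then show "integrand lam mu F f g w k v \<le> integrand lam mu F f g w' k v"
      using Jwd_antimono[where F=F and f=f and g=g, OF N[OF v] assms(4)] rho_sum_ge_1[OF assms(3), of v]
      by (auto simp: integrand_eq intro: divide_right_mono)
  qed (use assms in auto)
qed

lemma integral_integrand_le_first:
  assumes "0 \<le> a" "b \<le> 1" "1 \<le> k" "w \<le> 1"
  shows "integral {a..b} (integrand lam mu F f g w k) \<le> integral {a..b} (integrand lam mu F f g w 1)"
proof -
  obtain N where "negligible N" and N: "\<And>v. v \<in> {0..1} - N \<Longrightarrow> 0 \<le> 1 + (1 - F v) * g v / (f v)\<^sup>2"
    using inverse_hazard_slope_nonpos_ae by blast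
  show ?thesis
  proof (rule integral_le_off_negligible[OF integrand_integrable integrand_integrable \<open>negligible N\<close>])
    fix v
    assume "v \<in> {a..b} - N"
    then have v: "v \<in> {0..1} - N"
      using assms by auto
    have "Jwd F f g w v / rho_sum k v \<le> Jwd F f g w v / 1"
      using Jwd_ge_1[where F=F and f=f and g=g, OF N[OF v] assms(4)] rho_sum_ge_1[OF assms(3), of v] v
      by (intro divide_left_mono) auto
    then show "integrand lam mu F f g w k v \<le> integrand lam mu F f g w 1 v"
      by (simp add: integrand_eq rho_sum_def)
  qed (use assms in auto)
qed

lemma continuous_on_Jw: "continuous_on {0..1} (Jw F f w)"
proof -
  have "f v \<noteq> 0" if "v \<in> {0..1}" for v
    using f_pos that by force
  then show ?thesis
    unfolding Jw_def[abs_def] by (intro continuous_intros continuous_on_F continuous_on_f) auto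
qed

lemma strict_mono_on_Jw:
  assumes "w \<in> {0..1}"
  shows "strict_mono_on {0..1} (Jw F f w)"
proof (rule strict_mono_onI)
  fix x y :: real
  assume xy: "x \<in> {0..1}" "y \<in> {0..1}" "x < y"
  have "w * x \<le> w * y"
    using assms xy by (intro mult_left_mono) auto
  moreover have "(1 - w) * Jw F f 0 x \<le> (1 - w) * Jw F f 0 y"
    using assms strict_mono_onD[OF J_mono xy] by (intro mult_left_mono) auto
  moreover have "w * x < w * y \<or> (1 - w) * Jw F f 0 x < (1 - w) * Jw F f 0 y"
    using assms strict_mono_onD[OF J_mono xy] xy by (cases "w = 1") auto
  ultimately show "Jw F f w x < Jw F f w y"
    by (auto simp: Jw_eq_convex_combination[of F f w])
qed

lemma Jw_antimono: "w' \<le> w \<Longrightarrow> v \<in> {0..1} \<Longrightarrow> Jw F f w' v \<le> Jw F f w v"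
  using Jw_diff[of F f w v w'] F_range[of v] f_pos
  by (smt (verit) atLeastAtMost_iff divide_nonneg_pos mult_nonneg_nonneg)

abbreviation vh :: "real \<Rightarrow> nat \<Rightarrow> real" where
  "vh w k \<equiv> vhat lam mu c F f g w k"

declare vhat.simps(2,3)[simp del]

lemma vhat_1:
  assumes "w \<in> {0..1}"
  shows "vh w 1 \<in> {0..<1} \<and> Jw F f w (vh w 1) = c / mu"
proof -
  have "0 < c / mu" "c / mu < 1"
    using c_pos c_lt_mu mu_pos by auto
  have "0 \<le> (1 - w) / f 0"
    using assms f_pos[rule_format, of 0] by simp
  then have "Jw F f w 0 \<le> c / mu"
    using \<open>0 < c / mu\<close> by (simp add: Jw_def F_0)
  moreover have Jw_1: "Jw F f w 1 = 1"
    by (simp add: Jw_def F_one)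
  ultimately obtain x where x: "x \<in> {0..1}" "Jw F f w x = c / mu"
    using IVT'[of "Jw F f w" 0 "c / mu" 1] continuous_on_Jw \<open>c / mu < 1\<close> by auto
  have "(THE x. x \<in> {0..1} \<and> Jw F f w x = c / mu) = x"
    using strict_mono_on_imp_inj_on[OF strict_mono_on_Jw[OF assms]] x by (rule THE_eq_if_inj_on)
  moreover have "x \<noteq> 1"
    using x Jw_1 \<open>c / mu < 1\<close> by auto
  ultimately show ?thesis
    using x \<open>c / mu < 1\<close> by (simp add: vhat.simps(2))
qed

lemma vhat_Suc_Suc:
  "vh w (Suc (Suc m)) =
    (if vh w (Suc m) < 1 \<and> c \<le> mu * integral {vh w (Suc m)..1} (integrand lam mu F f g w (Suc (Suc m)))
     then THE x. x \<in> {vh w (Suc m)<..1} \<and>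
       mu * integral {vh w (Suc m)..x} (integrand lam mu F f g w (Suc (Suc m))) = c
     else 1)"
  by (simp only: vhat.simps Let_def)

lemma vhat_next:
  assumes "w \<in> {0..1}" "vh w (Suc m) \<in> {0..<1}"
    and "c \<le> mu * integral {vh w (Suc m)..1} (integrand lam mu F f g w (Suc (Suc m)))"
  shows "vh w (Suc (Suc m)) \<in> {vh w (Suc m)<..1}"
    "mu * integral {vh w (Suc m)..vh w (Suc (Suc m))} (integrand lam mu F f g w (Suc (Suc m))) = c"
proof -
  define p where "p = vh w (Suc m)"
  define G where "G x = mu * integral {p..x} (integrand lam mu F f g w (Suc (Suc m)))" for x
  have p: "0 \<le> p" "p < 1"
    using assms(2) by (auto simp: p_def)
  have "strict_mono_on {p..1} G"
  proof (rule strict_mono_onI)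
    fix x y
    assume "x \<in> {p..1}" "y \<in> {p..1}" "x < y"
    with p assms(1) show "G x < G y"
      using integral_integrand_combine[of p x y "Suc (Suc m)" w]
        integral_integrand_pos[of x y "Suc (Suc m)" w] mu_pos
      by (simp add: G_def algebra_simps)
  qed
  moreover have "continuous_on {p..1} G"
    unfolding G_def using p
    by (intro continuous_intros indefinite_integral_continuous_1 integrand_integrable) auto
  moreover have "G p \<le> c" "c \<le> G 1"
    using c_pos assms(3) by (simp_all add: G_def p_def)
  ultimately obtain x where x: "x \<in> {p..1}" "G x = c"
    using IVT'[of G p c 1] p by auto
  have "x \<noteq> p"
    using x c_pos by (auto simp: G_def)
  with x have "x \<in> {p<..1}"
    by auto
  have "inj_on G {p<..1}"
    using strict_mono_on_imp_inj_on[OF \<open>strict_mono_on {p..1} G\<close>] by (rule inj_on_subset) auto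
  from THE_eq_if_inj_on[OF this \<open>x \<in> {p<..1}\<close> x(2)]
  have "vh w (Suc (Suc m)) = x"
    using assms(2,3) by (simp add: vhat_Suc_Suc G_def p_def)
  then show "vh w (Suc (Suc m)) \<in> {vh w (Suc m)<..1}"
    "mu * integral {vh w (Suc m)..vh w (Suc (Suc m))} (integrand lam mu F f g w (Suc (Suc m))) = c"
    using \<open>x \<in> {p<..1}\<close> x(2) by (simp_all add: G_def p_def)
qed

lemma vhat_range: "w \<in> {0..1} \<Longrightarrow> vh w k \<in> {0..1}"
proof (induction k)
  case 0
  then show ?case
    by simp
next
  case (Suc k)
  show ?case
  proof (cases k)
    case 0
    then show ?thesis
      using vhat_1[OF Suc.prems] by simp
  next
    case (Suc m)
    let ?reach = "c \<le> mu * integral {vh w (Suc m)..1} (integrand lam mu F f g w (Suc (Suc m)))"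
    show ?thesis
    proof (cases "vh w (Suc m) < 1 \<and> ?reach")
      case True
      then show ?thesis
        using vhat_next(1)[OF Suc.prems, of m] Suc.IH Suc.prems \<open>k = Suc m\<close> by auto
    next
      case False
      then have "vh w (Suc (Suc m)) = 1"
        unfolding vhat_Suc_Suc by (rule if_not_P)
      then show ?thesis
        using \<open>k = Suc m\<close> by simp
    qed
  qed
qed

lemma vhat_Suc_Suc_lt_1:
  assumes "w \<in> {0..1}" "vh w (Suc (Suc m)) < 1"
  shows "vh w (Suc m) < vh w (Suc (Suc m))"
    "mu * integral {vh w (Suc m)..vh w (Suc (Suc m))} (integrand lam mu F f g w (Suc (Suc m))) = c"
proof -
  have "vh w (Suc m) < 1"
    and reach: "c \<le> mu * integral {vh w (Suc m)..1} (integrand lam mu F f g w (Suc (Suc m)))"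
    using assms(2) by (simp_all add: vhat_Suc_Suc split: if_splits)
  then have "vh w (Suc m) \<in> {0..<1}"
    using vhat_range[OF assms(1)] by auto
  from vhat_next[OF assms(1) this reach] show "vh w (Suc m) < vh w (Suc (Suc m))"
    "mu * integral {vh w (Suc m)..vh w (Suc (Suc m))} (integrand lam mu F f g w (Suc (Suc m))) = c"
    by simp_all
qed

lemma vhat_lt_1_prefix: "vh w k < 1 \<Longrightarrow> 1 \<le> j \<Longrightarrow> j \<le> k \<Longrightarrow> vh w j < 1"
proof (induction k)
  case 0
  then show ?case
    by simp
next
  case (Suc k)
  show ?case
  proof (cases "j = Suc k")
    case False
    with Suc.prems obtain m where "k = Suc m"
      by (cases k) auto
    then have "vh w k < 1"
      using Suc.prems(1) by (simp add: vhat_Suc_Suc split: if_splits)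
    with False Suc show ?thesis
      by simp
  qed (use Suc.prems in simp)
qed

text \<open>Each step between consecutive thresholds carries mass c/mu of the integrand for k, hence
  at least c/mu of the integrand for k = 1; so only finitely many thresholds fit below 1.\<close>

lemma integral_up_to_vhat_ge:
  assumes "w \<in> {0..1}"
  shows "vh w (Suc n) < 1 \<Longrightarrow> real n * (c / mu) \<le> integral {0..vh w (Suc n)} (integrand lam mu F f g w 1)"
proof (induction n)
  case 0
  show ?case
    using vhat_range[OF assms, of 1] assms integral_integrand_nonneg[of 0 "vh w 1" 1 w] by simp
next
  case (Suc n)
  let ?I = "integrand lam mu F f g w"
  define p x where "p = vh w (Suc n)" and "x = vh w (Suc (Suc n))"
  have "p < x" and step: "mu * integral {p..x} (?I (Suc (Suc n))) = c"
    using vhat_Suc_Suc_lt_1[OF assms Suc.prems] by (simp_all add: p_def x_def)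
  have "p \<in> {0..1}" "x \<in> {0..1}"
    using vhat_range[OF assms] by (simp_all add: p_def x_def)
  have "real n * (c / mu) \<le> integral {0..p} (?I 1)"
    using Suc.IH \<open>p < x\<close> Suc.prems by (simp add: p_def x_def)
  moreover have "c / mu \<le> integral {p..x} (?I 1)"
  proof -
    have "c / mu = integral {p..x} (?I (Suc (Suc n)))"
      using step mu_pos by (simp add: field_simps)
    also have "\<dots> \<le> integral {p..x} (?I 1)"
      using \<open>p \<in> {0..1}\<close> \<open>x \<in> {0..1}\<close> assms by (intro integral_integrand_le_first) auto
    finally show ?thesis .
  qed
  moreover have "integral {0..p} (?I 1) + integral {p..x} (?I 1) = integral {0..x} (?I 1)"
    using \<open>p < x\<close> \<open>p \<in> {0..1}\<close> \<open>x \<in> {0..1}\<close> by (intro integral_integrand_combine) auto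
  ultimately show ?case
    by (simp add: x_def algebra_simps)
qed

lemma finite_thresholds_below_1:
  assumes "w \<in> {0..1}"
  shows "finite {k. 1 \<le> k \<and> vh w k < 1}"
proof -
  define T where "T = integral {0..1} (integrand lam mu F f g w 1)"
  have bound: "real n \<le> T * mu / c" if "vh w (Suc n) < 1" for n
  proof -
    have "vh w (Suc n) \<in> {0..1}"
      using vhat_range[OF assms] by blast
    then have "integral {0..vh w (Suc n)} (integrand lam mu F f g w 1) \<le> T"
      using integral_integrand_combine[of 0 "vh w (Suc n)" 1 1 w]
        integral_integrand_nonneg[of "vh w (Suc n)" 1 1 w] assms
      by (simp add: T_def)
    with integral_up_to_vhat_ge[OF assms that] have "real n * (c / mu) \<le> T"
      by linarith
    then show ?thesis
      using c_pos mu_pos by (simp add: field_simps)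
  qed
  have "{k. 1 \<le> k \<and> vh w k < 1} \<subseteq> {..Suc (nat \<lceil>T * mu / c\<rceil>)}"
  proof
    fix k
    assume k: "k \<in> {k. 1 \<le> k \<and> vh w k < 1}"
    then obtain n where "k = Suc n"
      by (cases k) auto
    with k have "real n \<le> T * mu / c"
      by (intro bound) simp
    then have "n \<le> nat \<lceil>T * mu / c\<rceil>"
      by linarith
    with \<open>k = Suc n\<close> show "k \<in> {..Suc (nat \<lceil>T * mu / c\<rceil>)}"
      by simp
  qed
  then show ?thesis
    using finite_subset by blast
qed

lemma thresholds_below_1_eq:
  assumes "w \<in> {0..1}"
  shows "{k. 1 \<le> k \<and> vh w k < 1} = {1..Kw lam mu c F f g w}"
proof -
  define A where "A = {k. 1 \<le> k \<and> vh w k < 1}"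
  have "finite A" "1 \<in> A"
    using finite_thresholds_below_1[OF assms] vhat_1[OF assms] by (auto simp: A_def)
  then have "A = {1..Max A}"
    using Max_in[of A] vhat_lt_1_prefix by (fastforce simp: A_def)
  then show ?thesis
    by (metis A_def Kw_def card_atLeastAtMost diff_Suc_1)
qed

lemma vhat_1_antimono:
  assumes "w \<in> {0..1}" "w' \<in> {0..1}" "w' \<le> w"
  shows "vh w 1 \<le> vh w' 1"
proof -
  have "vh w 1 \<in> {0..1}" "vh w' 1 \<in> {0..1}"
    using vhat_range assms(1,2) by blast+
  have "Jw F f w (vh w 1) = Jw F f w' (vh w' 1)"
    using vhat_1[OF assms(1)] vhat_1[OF assms(2)] by simp
  also have "\<dots> \<le> Jw F f w (vh w' 1)"
    using Jw_antimono[OF assms(3) \<open>vh w' 1 \<in> {0..1}\<close>] .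
  finally show ?thesis
    using strict_mono_on_less_eq[OF strict_mono_on_Jw[OF assms(1)]] \<open>vh w 1 \<in> {0..1}\<close>
      \<open>vh w' 1 \<in> {0..1}\<close> by blast
qed

lemma vhat_order_flip_persists:
  assumes "w \<in> {0..1}" "w' \<in> {0..1}" "w' \<le> w"
    and "vh w (Suc (Suc m)) < 1" "vh w' (Suc (Suc m)) < 1"
    and flip: "vh w' (Suc m) < vh w (Suc m)"
  shows "vh w' (Suc (Suc m)) < vh w (Suc (Suc m))"
proof (rule ccontr)
  assume not_flipped: "\<not> ?thesis"
  define p x p' x' where "p = vh w (Suc m)" and "x = vh w (Suc (Suc m))"
    and "p' = vh w' (Suc m)" and "x' = vh w' (Suc (Suc m))"
  let ?I = "integrand lam mu F f g w (Suc (Suc m))"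
  let ?I' = "integrand lam mu F f g w' (Suc (Suc m))"
  have "x \<le> x'" "p' < p"
    using not_flipped flip by (simp_all add: p_def x_def p'_def x'_def)
  have range: "p \<in> {0..1}" "x \<in> {0..1}" "p' \<in> {0..1}" "x' \<in> {0..1}"
    using vhat_range assms(1,2) by (simp_all add: p_def x_def p'_def x'_def)
  have "p < x" "mu * integral {p..x} ?I = c"
    using vhat_Suc_Suc_lt_1[OF assms(1,4)] by (simp_all add: p_def x_def)
  have "p' < x'" "mu * integral {p'..x'} ?I' = c"
    using vhat_Suc_Suc_lt_1[OF assms(2,5)] by (simp_all add: p'_def x'_def)
  have "integral {p..x} ?I \<le> integral {p..x} ?I'"
    using range assms(3) by (intro integral_integrand_antimono) auto
  also have "\<dots> \<le> integral {p..x} ?I' + integral {x..x'} ?I'"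
    using range assms(2) \<open>x \<le> x'\<close> by (simp add: integral_integrand_nonneg)
  also have "\<dots> = integral {p..x'} ?I'"
    using range \<open>p < x\<close> \<open>x \<le> x'\<close> by (intro integral_integrand_combine) auto
  also have "\<dots> < integral {p'..p} ?I' + integral {p..x'} ?I'"
    using range assms(2) \<open>p' < p\<close> by (simp add: integral_integrand_pos)
  also have "\<dots> = integral {p'..x'} ?I'"
    using range \<open>p' < p\<close> \<open>p < x\<close> \<open>x \<le> x'\<close> by (intro integral_integrand_combine) auto
  finally have "mu * integral {p..x} ?I < mu * integral {p'..x'} ?I'"
    using mu_pos by simp
  with \<open>mu * integral {p..x} ?I = c\<close> \<open>mu * integral {p'..x'} ?I' = c\<close> show False
    by simp
qed

end

theorem proposition3:
  fixes lam mu c w w' :: real and F f g :: "real \<Rightarrow> real"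
  assumes mu_pos: "mu > 0" and lam_pos: "lam > 0" and c_pos: "c > 0"
    and c_lt: "c < mu"
    and f_pos: "\<forall>v\<in>{0..1}. f v > 0"
    and g_int: "g absolutely_integrable_on {0..1}"
    and f_ac: "\<forall>x\<in>{0..1}. (g has_integral (f x - f 0)) {0..x}"
    and F_def: "\<forall>x\<in>{0..1}. F x = integral {0..x} f"
    and F_one: "F 1 = 1"
    and J_mono: "strict_mono_on {0..1} (Jw F f 0)"
    and J0: "Jw F f 0 0 < 0"
    and ihr: "\<forall>x\<in>{0..1}. \<forall>y\<in>{0..1}. x \<le> y \<longrightarrow> (1 - F y) / f y \<le> (1 - F x) / f x"
    and w_range: "w \<in> {0..1}" "w' \<in> {0..1}" and ww': "w > w'"
  shows "\<exists>kbar \<in> {1..min (Kw lam mu c F f g w') (Kw lam mu c F f g w)}.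
           (\<forall>k \<in> {1..kbar}. vhat lam mu c F f g w k \<le> vhat lam mu c F f g w' k) \<and>
           (\<forall>k. kbar + 1 \<le> k \<and> k \<le> min (Kw lam mu c F f g w') (Kw lam mu c F f g w) \<longrightarrow>
                vhat lam mu c F f g w k > vhat lam mu c F f g w' k)"
proof -
  interpret queue_market lam mu c F f g
    using mu_pos lam_pos c_pos c_lt f_pos g_int f_ac F_def F_one J_mono ihr by unfold_locales
  let ?n = "min (Kw lam mu c F f g w') (Kw lam mu c F f g w)"
  have below_1: "1 \<le> k \<and> k \<le> ?n \<Longrightarrow> vh w k < 1 \<and> vh w' k < 1" for k
    using thresholds_below_1_eq[OF w_range(1)] thresholds_below_1_eq[OF w_range(2)] by auto
  show ?thesis
  proof (rule single_crossing)
    show "1 \<le> ?n"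
      using thresholds_below_1_eq[OF w_range(1)] thresholds_below_1_eq[OF w_range(2)]
        vhat_1[OF w_range(1)] vhat_1[OF w_range(2)] by auto
    show "vh w 1 \<le> vh w' 1"
      using vhat_1_antimono w_range ww' by simp
  next
    fix k
    assume "1 \<le> k" "k < ?n" "vh w' k < vh w k"
    then obtain m where "k = Suc m"
      by (cases k) auto
    with \<open>k < ?n\<close> \<open>vh w' k < vh w k\<close> show "vh w' (Suc k) < vh w (Suc k)"
      using below_1[of "Suc k"] w_range ww' vhat_order_flip_persists[of w w' m] by simp
  qed
qed

end
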